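(* Let $G$ be a finitely generated torsion-free nilpotent group and suppose the decomposition $\overline{G}=R_1\times R_2$ into rational subgroups matches the decomposition $G=G_1\times G_2$. Then $\overline{G}=R_1\times R_2$ gives rise to a decomposition of $G/Z(G)$; that is, with $X_i=R_iZ(\overline{G})\cap G$, we have $G=X_1X_2$, $[X_1,X_2]=1$ and $X_1\cap X_2=Z(G)$.
   Context: $\overline{G}$ is the rational closure of $G$ (torsion-free nilpotent, containing $G$, uniquely divisible, each element has a positive power in $G$); for $H\le G$, $\overline{H}$ is the set of elements of $\overline{G}$ having a positive power in $H$. A subgroup is rational if closed under taking all $n$-th roots. A decomposition $\overline{G}=R_1\times R_2$ matches $G=G_1\times G_2$ if $\overline{G_i}\,Z(\overline{G})=R_i\,Z(\overline{G})$ for $i=1,2$. *)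

theory Defs
  imports "HOL-Algebra.Algebra"
begin

definition commutator :: "('a, 'b) monoid_scheme \<Rightarrow> 'a \<Rightarrow> 'a \<Rightarrow> 'a" where
  "commutator G x y = x \<otimes>\<^bsub>G\<^esub> y \<otimes>\<^bsub>G\<^esub> inv\<^bsub>G\<^esub> x \<otimes>\<^bsub>G\<^esub> inv\<^bsub>G\<^esub> y"

text \<open>Lower central series: gamma_1 = G (index 0 here), gamma_{i+1} = [gamma_i, G].\<close>
fun lower_central :: "('a, 'b) monoid_scheme \<Rightarrow> nat \<Rightarrow> 'a set" where
  "lower_central G 0 = carrier G"
| "lower_central G (Suc n) =
     generate G {commutator G x y | x y. x \<in> lower_central G n \<and> y \<in> carrier G}"

definition nilpotent_group :: "('a, 'b) monoid_scheme \<Rightarrow> bool" where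
  "nilpotent_group G \<longleftrightarrow> group G \<and> (\<exists>n. lower_central G n = {\<one>\<^bsub>G\<^esub>})"

definition torsion_free :: "('a, 'b) monoid_scheme \<Rightarrow> bool" where
  "torsion_free G \<longleftrightarrow> (\<forall>x\<in>carrier G. \<forall>n::nat. n > 0 \<longrightarrow> x [^]\<^bsub>G\<^esub> n = \<one>\<^bsub>G\<^esub> \<longrightarrow> x = \<one>\<^bsub>G\<^esub>)"

definition finitely_generated :: "('a, 'b) monoid_scheme \<Rightarrow> bool" where
  "finitely_generated G \<longleftrightarrow> (\<exists>S. finite S \<and> S \<subseteq> carrier G \<and> generate G S = carrier G)"

definition uniquely_divisible :: "('a, 'b) monoid_scheme \<Rightarrow> bool" where
  "uniquely_divisible G \<longleftrightarrow>
     (\<forall>x\<in>carrier G. \<forall>n::nat. n > 0 \<longrightarrow> (\<exists>!y. y \<in> carrier G \<and> y [^]\<^bsub>G\<^esub> n = x))"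

definition center :: "('a, 'b) monoid_scheme \<Rightarrow> 'a set" where
  "center G = {z \<in> carrier G. \<forall>x\<in>carrier G. z \<otimes>\<^bsub>G\<^esub> x = x \<otimes>\<^bsub>G\<^esub> z}"

definition rational_closure_of :: "('a, 'b) monoid_scheme \<Rightarrow> 'a set \<Rightarrow> bool" where
  "rational_closure_of Gb H \<longleftrightarrow>
     nilpotent_group Gb \<and> torsion_free Gb \<and> subgroup H Gb \<and> uniquely_divisible Gb \<and>
     (\<forall>x\<in>carrier Gb. \<exists>n::nat. n > 0 \<and> x [^]\<^bsub>Gb\<^esub> n \<in> H)"

definition rat_closure_set :: "('a, 'b) monoid_scheme \<Rightarrow> 'a set \<Rightarrow> 'a set" where
  "rat_closure_set Gb H = {x \<in> carrier Gb. \<exists>n::nat. n > 0 \<and> x [^]\<^bsub>Gb\<^esub> n \<in> H}"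

definition rational_subgroup :: "'a set \<Rightarrow> ('a, 'b) monoid_scheme \<Rightarrow> bool" where
  "rational_subgroup R G \<longleftrightarrow> subgroup R G \<and>
     (\<forall>x\<in>carrier G. \<forall>n::nat. n > 0 \<longrightarrow> x [^]\<^bsub>G\<^esub> n \<in> R \<longrightarrow> x \<in> R)"

definition internal_direct_product :: "('a, 'b) monoid_scheme \<Rightarrow> 'a set \<Rightarrow> 'a set \<Rightarrow> 'a set \<Rightarrow> bool" where
  "internal_direct_product G H A B \<longleftrightarrow>
     subgroup A G \<and> subgroup B G \<and> A \<subseteq> H \<and> B \<subseteq> H \<and>
     A <#>\<^bsub>G\<^esub> B = H \<and> A \<inter> B = {\<one>\<^bsub>G\<^esub>} \<and>
     (\<forall>a\<in>A. \<forall>b\<in>B. a \<otimes>\<^bsub>G\<^esub> b = b \<otimes>\<^bsub>G\<^esub> a)"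

end

theory Submission
  imports Defs
begin

text \<open>
  An element of \<open>G\<close> that is central in \<open>G\<close> commutes with a positive power of every element
  of \<open>\<overline>G\<close>, and unique divisibility of \<open>\<overline>G\<close> upgrades this to commuting with the element
  itself; hence \<open>Z(G) = G \<inter> Z(\<overline>G)\<close>. Writing \<open>Z = Z(\<overline>G)\<close>, the sets \<open>R\<^sub>1Z\<close> and \<open>R\<^sub>2Z\<close>
  commute elementwise, and their intersection is \<open>Z\<close>: an element \<open>r\<^sub>1z\<^sub>1 = r\<^sub>2z\<^sub>2\<close> commutes
  with \<open>R\<^sub>2\<close> through its first factorisation and with \<open>R\<^sub>1\<close> through its second.
  Intersecting with \<open>G\<close> gives \<open>[X\<^sub>1,X\<^sub>2] = 1\<close> and \<open>X\<^sub>1 \<inter> X\<^sub>2 = Z(G)\<close>, and since matching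
  gives \<open>G\<^sub>i \<subseteq> \<overline>G\<^sub>iZ = R\<^sub>iZ\<close>, also \<open>G = G\<^sub>1G\<^sub>2 \<subseteq> X\<^sub>1X\<^sub>2 \<subseteq> G\<close>.
\<close>

lemma set_mult_memI: "h \<in> H \<Longrightarrow> k \<in> K \<Longrightarrow> h \<otimes>\<^bsub>G\<^esub> k \<in> H <#>\<^bsub>G\<^esub> K"
  unfolding set_mult_def by blast

lemma set_mult_memE:
  assumes "x \<in> H <#>\<^bsub>G\<^esub> K"
  obtains h k where "h \<in> H" "k \<in> K" "x = h \<otimes>\<^bsub>G\<^esub> k"
  using assms unfolding set_mult_def by blast

lemma center_commute:
  "z \<in> center G \<Longrightarrow> x \<in> carrier G \<Longrightarrow> z \<otimes>\<^bsub>G\<^esub> x = x \<otimes>\<^bsub>G\<^esub> z"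
  unfolding center_def by blast

lemma center_subset_carrier: "center G \<subseteq> carrier G"
  unfolding center_def by blast

lemma (in monoid) one_in_center: "\<one> \<in> center G"
  unfolding center_def by simp

lemma (in monoid) center_subset_set_mult:
  assumes "\<one> \<in> A"
  shows "center G \<subseteq> A <#> center G"
proof
  fix z assume z: "z \<in> center G"
  then have "z \<in> carrier G" using center_subset_carrier[of G] by blast
  then show "z \<in> A <#> center G"
    using set_mult_memI[of \<one> A z "center G" G] assms z by simp
qed

lemma (in monoid) subset_set_mult_center:
  assumes "A \<subseteq> carrier G"
  shows "A \<subseteq> A <#> center G"
proof
  fix a assume a: "a \<in> A"
  then have "a \<in> carrier G" using assms by blast
  then show "a \<in> A <#> center G"
    using set_mult_memI[of a A \<one> "center G" G] a one_in_center by simp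
qed

lemma (in monoid) subset_rat_closure_set_mult_center:
  assumes "H \<subseteq> carrier G"
  shows "H \<subseteq> rat_closure_set G H <#> center G"
proof -
  have "H \<subseteq> rat_closure_set G H"
    using assms unfolding rat_closure_set_def by (auto intro!: exI[of _ "1::nat"])
  moreover have "rat_closure_set G H \<subseteq> carrier G"
    unfolding rat_closure_set_def by blast
  ultimately show ?thesis
    using subset_set_mult_center by blast
qed

lemma (in group) nat_pow_conj:
  assumes "g \<in> carrier G" "x \<in> carrier G"
  shows "(g \<otimes> x \<otimes> inv g) [^] (n::nat) = g \<otimes> x [^] n \<otimes> inv g"
proof (induction n)
  case (Suc n)
  have "\<And>y. y \<in> carrier G \<Longrightarrow> inv g \<otimes> (g \<otimes> y) = y"
    using assms(1) by (simp add: m_assoc[symmetric])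
  with Suc assms show ?case by (simp add: m_assoc)
qed (use assms in simp)

lemma (in group) commutes_of_commutes_pow:
  assumes "uniquely_divisible G" "g \<in> carrier G" "x \<in> carrier G" "n > 0"
    and "g \<otimes> x [^] (n::nat) = x [^] n \<otimes> g"
  shows "g \<otimes> x = x \<otimes> g"
proof -
  have "(g \<otimes> x \<otimes> inv g) [^] n = x [^] n \<otimes> g \<otimes> inv g"
    using assms by (simp add: nat_pow_conj)
  also have "\<dots> = x [^] n"
    using assms by (simp add: m_assoc)
  finally have conj_root: "(g \<otimes> x \<otimes> inv g) [^] n = x [^] n" .
  have root_unique: "\<And>y1 y2. \<lbrakk>y1 \<in> carrier G; y2 \<in> carrier G; y1 [^] n = x [^] n; y2 [^] n = x [^] n\<rbrakk>
      \<Longrightarrow> y1 = y2"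
    using assms(1,3,4) nat_pow_closed[OF assms(3)] unfolding uniquely_divisible_def by blast
  have "g \<otimes> x \<otimes> inv g = x"
    by (rule root_unique) (use assms(2,3) conj_root in auto)
  then have "g \<otimes> x \<otimes> inv g \<otimes> g = x \<otimes> g" by simp
  then show ?thesis
    using assms(2,3) by (simp add: m_assoc)
qed

lemma (in group) center_rational_closure:
  assumes "rational_closure_of G H"
  shows "center (G\<lparr>carrier := H\<rparr>) = H \<inter> center G"
proof -
  have H: "H \<subseteq> carrier G" "uniquely_divisible G"
    and roots: "\<And>x. x \<in> carrier G \<Longrightarrow> \<exists>n::nat. n > 0 \<and> x [^] n \<in> H"
    using assms subgroup.subset unfolding rational_closure_of_def by auto
  have "g \<in> center G" if "g \<in> center (G\<lparr>carrier := H\<rparr>)" for g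
  proof -
    have g: "g \<in> carrier G" "\<And>y. y \<in> H \<Longrightarrow> g \<otimes> y = y \<otimes> g"
      using that H(1) unfolding center_def by auto
    have "g \<otimes> x = x \<otimes> g" if "x \<in> carrier G" for x
      using roots[OF that] commutes_of_commutes_pow[OF H(2) g(1) that] g(2) by blast
    with g(1) show ?thesis unfolding center_def by blast
  qed
  then show ?thesis
    using H(1) unfolding center_def by auto
qed

lemma (in group) commutes_set_mult:
  assumes "A \<subseteq> carrier G" "B \<subseteq> carrier G" "x \<in> carrier G"
    and "\<forall>a\<in>A. x \<otimes> a = a \<otimes> x" "\<forall>b\<in>B. x \<otimes> b = b \<otimes> x"
    and "y \<in> A <#> B"
  shows "x \<otimes> y = y \<otimes> x"
proof -
  obtain a b where ab: "a \<in> A" "b \<in> B" "y = a \<otimes> b"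
    using assms(6) by (rule set_mult_memE)
  have carr: "a \<in> carrier G" "b \<in> carrier G"
    using ab assms(1,2) by auto
  have "x \<otimes> y = a \<otimes> (x \<otimes> b)"
    using ab(1,3) carr assms(3,4) by (simp add: m_assoc[symmetric])
  also have "\<dots> = y \<otimes> x"
    using ab(2,3) carr assms(3,5) by (simp add: m_assoc)
  finally show ?thesis .
qed

lemma (in group) mult_center_commutes:
  assumes "r \<in> carrier G" "z \<in> center G" "y \<in> carrier G" "r \<otimes> y = y \<otimes> r"
  shows "r \<otimes> z \<otimes> y = y \<otimes> (r \<otimes> z)"
proof -
  have z: "z \<in> carrier G"
    using assms(2) center_subset_carrier[of G] by blast
  have "r \<otimes> z \<otimes> y = r \<otimes> y \<otimes> z"
    using assms(1,3) z center_commute[OF assms(2,3)] by (simp add: m_assoc)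
  also have "\<dots> = y \<otimes> (r \<otimes> z)"
    using assms(1,3,4) z by (simp add: m_assoc)
  finally show ?thesis .
qed

lemma (in group) set_mult_center_commute:
  assumes "A \<subseteq> carrier G" "B \<subseteq> carrier G" "\<forall>a\<in>A. \<forall>b\<in>B. a \<otimes> b = b \<otimes> a"
    and "x \<in> A <#> center G" "y \<in> B <#> center G"
  shows "x \<otimes> y = y \<otimes> x"
proof -
  obtain a z where a: "a \<in> A" "z \<in> center G" "x = a \<otimes> z"
    using assms(4) by (rule set_mult_memE)
  obtain b w where b: "b \<in> B" "w \<in> center G" "y = b \<otimes> w"
    using assms(5) by (rule set_mult_memE)
  have carr: "a \<in> carrier G" "b \<in> carrier G" "w \<in> carrier G"
    using a(1) b(1,2) assms(1,2) center_subset_carrier[of G] by auto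
  have "b \<otimes> a = a \<otimes> b"
    using assms(3)[rule_format, OF a(1) b(1)] by (rule sym)
  then have "y \<otimes> a = a \<otimes> y"
    using mult_center_commutes[OF carr(2) b(2) carr(1)] b(3) by simp
  then show ?thesis
    using mult_center_commutes[OF carr(1) a(2), of y] a(3) b(3) carr by simp
qed

lemma (in group) direct_factors_center_inter:
  assumes "internal_direct_product G (carrier G) R1 R2"
  shows "(R1 <#> center G) \<inter> (R2 <#> center G) = center G"
proof
  have R: "subgroup R1 G" "subgroup R2 G" "R1 <#> R2 = carrier G"
    and comm: "\<forall>a\<in>R1. \<forall>b\<in>R2. a \<otimes> b = b \<otimes> a"
    using assms unfolding internal_direct_product_def by auto
  have Rc: "R1 \<subseteq> carrier G" "R2 \<subseteq> carrier G"
    using R(1,2) subgroup.subset by auto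
  have comm': "\<forall>b\<in>R2. \<forall>a\<in>R1. b \<otimes> a = a \<otimes> b"
    using comm by metis
  show "(R1 <#> center G) \<inter> (R2 <#> center G) \<subseteq> center G"
  proof
    fix x assume x: "x \<in> (R1 <#> center G) \<inter> (R2 <#> center G)"
    then have xc: "x \<in> carrier G"
      using set_mult_closed[OF Rc(1) center_subset_carrier[of G]] by blast
    have "\<forall>b\<in>R2. x \<otimes> b = b \<otimes> x"
      using x set_mult_center_commute[OF Rc(1,2) comm, of x] subset_set_mult_center[OF Rc(2)]
      by blast
    moreover have "\<forall>a\<in>R1. x \<otimes> a = a \<otimes> x"
      using x set_mult_center_commute[OF Rc(2,1) comm', of x] subset_set_mult_center[OF Rc(1)]
      by blast
    ultimately have "\<forall>y\<in>carrier G. x \<otimes> y = y \<otimes> x"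
      using commutes_set_mult[OF Rc xc] R(3) by blast
    with xc show "x \<in> center G" unfolding center_def by blast
  qed
  show "center G \<subseteq> (R1 <#> center G) \<inter> (R2 <#> center G)"
    using center_subset_set_mult subgroup.one_closed[OF R(1)] subgroup.one_closed[OF R(2)] by blast
qed

theorem mainTheorem12:
  fixes Gb :: "('a, 'b) monoid_scheme" and G G1 G2 R1 R2 :: "'a set"
  assumes "group Gb"
    and "subgroup G Gb"
    and "finitely_generated (Gb\<lparr>carrier := G\<rparr>)"
    and "nilpotent_group (Gb\<lparr>carrier := G\<rparr>)"
    and "torsion_free (Gb\<lparr>carrier := G\<rparr>)"
    and "rational_closure_of Gb G"
    and "rational_subgroup R1 Gb" and "rational_subgroup R2 Gb"
    and "internal_direct_product Gb (carrier Gb) R1 R2"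
    and "internal_direct_product Gb G G1 G2"
    and "rat_closure_set Gb G1 <#>\<^bsub>Gb\<^esub> center Gb = R1 <#>\<^bsub>Gb\<^esub> center Gb"
    and "rat_closure_set Gb G2 <#>\<^bsub>Gb\<^esub> center Gb = R2 <#>\<^bsub>Gb\<^esub> center Gb"
  shows "let X1 = (R1 <#>\<^bsub>Gb\<^esub> center Gb) \<inter> G;
             X2 = (R2 <#>\<^bsub>Gb\<^esub> center Gb) \<inter> G
         in G = X1 <#>\<^bsub>Gb\<^esub> X2
            \<and> (\<forall>x1\<in>X1. \<forall>x2\<in>X2. x1 \<otimes>\<^bsub>Gb\<^esub> x2 = x2 \<otimes>\<^bsub>Gb\<^esub> x1)
            \<and> X1 \<inter> X2 = center (Gb\<lparr>carrier := G\<rparr>)"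
proof -
  interpret group Gb by fact
  have R: "subgroup R1 Gb" "subgroup R2 Gb" "\<forall>a\<in>R1. \<forall>b\<in>R2. a \<otimes>\<^bsub>Gb\<^esub> b = b \<otimes>\<^bsub>Gb\<^esub> a"
    and G: "subgroup G1 Gb" "subgroup G2 Gb" "G1 \<subseteq> G" "G2 \<subseteq> G" "G1 <#>\<^bsub>Gb\<^esub> G2 = G"
    using assms(9,10) unfolding internal_direct_product_def by auto
  define X1 where "X1 = (R1 <#>\<^bsub>Gb\<^esub> center Gb) \<inter> G"
  define X2 where "X2 = (R2 <#>\<^bsub>Gb\<^esub> center Gb) \<inter> G"
  have "G1 \<subseteq> X1" "G2 \<subseteq> X2"
    using subset_rat_closure_set_mult_center[OF subgroup.subset[OF G(1)]]
      subset_rat_closure_set_mult_center[OF subgroup.subset[OF G(2)]] assms(11,12) G(3,4)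
    unfolding X1_def X2_def by auto
  then have "G \<subseteq> X1 <#>\<^bsub>Gb\<^esub> X2"
    using G(5) mono_set_mult by blast
  moreover have "X1 <#>\<^bsub>Gb\<^esub> X2 \<subseteq> G"
    using mono_set_mult[of X1 G X2 G Gb] subgroup_mult_id[OF assms(2)]
    unfolding X1_def X2_def by blast
  moreover have "X1 \<inter> X2 = center (Gb\<lparr>carrier := G\<rparr>)"
    using direct_factors_center_inter[OF assms(9)] center_rational_closure[OF assms(6)]
    unfolding X1_def X2_def by blast
  moreover have "\<forall>x1\<in>X1. \<forall>x2\<in>X2. x1 \<otimes>\<^bsub>Gb\<^esub> x2 = x2 \<otimes>\<^bsub>Gb\<^esub> x1"
    using set_mult_center_commute[OF subgroup.subset[OF R(1)] subgroup.subset[OF R(2)] R(3)]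
    unfolding X1_def X2_def by blast
  ultimately show ?thesis
    unfolding Let_def X1_def X2_def by blast
qed

end
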